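(* Let $X=(X(s))_{s\in\mathbb R^2}$ be an isotropic standard Gaussian process whose auto-correlation function $\rho$ decreases to $0$ as $h\to\infty$, let $u\in\mathbb R_+$ and let $\mathcal A$ be either a disk or a square. Then $$\lim_{\lambda\to\infty}\mathcal R_1(\lambda\mathcal A,\mathcal D^+_{X,u})=0.$$
   Context: Isotropic standard Gaussian: $\mathbb E X(s)=0$, $\mathrm{Var}X(s)=1$, $\mathrm{Cov}(X(s),X(t))=\rho(\|s-t\|)$. $\lambda\mathcal A=\{\lambda x:x\in\mathcal A\}$. $\mathcal R_1(\mathcal B,\mathcal D^+_{X,u})=\mathrm{Var}\big(\frac1{|\mathcal B|}\int_{\mathcal B}(X(s)-u)^+\,\mathrm ds\big)$ with $|\mathcal B|$ the Lebesgue measure of $\mathcal B$. *)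

theory Defs
  imports "HOL-Probability.Probability"
begin

definition gaussian_process :: "'a measure \<Rightarrow> ('s \<Rightarrow> 'a \<Rightarrow> real) \<Rightarrow> bool" where
  "gaussian_process M X \<longleftrightarrow>
     (\<forall>s. X s \<in> borel_measurable M) \<and>
     (\<forall>(S::'s set) (c::'s \<Rightarrow> real). finite S \<longrightarrow>
        (\<exists>m v. v \<ge> 0 \<and> (\<forall>t. char (distr M borel (\<lambda>\<omega>. \<Sum>s\<in>S. c s * X s \<omega>)) t
                 = exp (\<i> * complex_of_real (t * m) - complex_of_real (v * t\<^sup>2 / 2)))))"

definition isotropic_standard_gaussian ::
    "'a measure \<Rightarrow> (real^2 \<Rightarrow> 'a \<Rightarrow> real) \<Rightarrow> (real \<Rightarrow> real) \<Rightarrow> bool" where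
  "isotropic_standard_gaussian M X \<rho> \<longleftrightarrow>
     prob_space M \<and> gaussian_process M X \<and>
     (\<forall>s. prob_space.expectation M (X s) = 0) \<and>
     (\<forall>s. prob_space.variance M (X s) = 1) \<and>
     (\<forall>s t. prob_space.expectation M
              (\<lambda>\<omega>. (X s \<omega> - prob_space.expectation M (X s)) * (X t \<omega> - prob_space.expectation M (X t)))
            = \<rho> (norm (s - t)))"

definition is_disk :: "(real^2) set \<Rightarrow> bool" where
  "is_disk A \<longleftrightarrow> (\<exists>c r. r > 0 \<and> A = cball c r)"

definition is_square :: "(real^2) set \<Rightarrow> bool" where
  "is_square A \<longleftrightarrow> (\<exists>p e1 e2 L. L > 0 \<and> norm e1 = 1 \<and> norm e2 = 1 \<and> e1 \<bullet> e2 = 0 \<and>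
      A = {p + a *\<^sub>R e1 + b *\<^sub>R e2 | a b. a \<in> {0..L} \<and> b \<in> {0..L}})"

text \<open>R_1(B, D^+_{X,u}) = Var( (1/|B|) \<integral>_B (X(s)-u)^+ ds ).\<close>
definition R1 :: "'a measure \<Rightarrow> (real^2 \<Rightarrow> 'a \<Rightarrow> real) \<Rightarrow> real \<Rightarrow> (real^2) set \<Rightarrow> real" where
  "R1 M X u B = prob_space.variance M
      (\<lambda>\<omega>. (1 / measure lborel B) * (LINT s:B|lborel. max 0 (X s \<omega> - u)))"

end

theory Submission
  imports Defs "HOL-Real_Asymp.Real_Asymp"
begin

text \<open>
  \<open>R\<^sub>1(B)\<close> is the variance of the spatial average over \<open>B\<close> of \<open>f (X s)\<close>, \<open>f x = max 0 (x - u)\<close>,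
  so by Fubini it is bounded by \<open>|B|\<^sup>-\<^sup>2\<close> times the integral over \<open>B \<times> B\<close> of the covariances
  \<open>Cov (f (X s), f (X t))\<close>. These are at most \<open>1\<close>, and at most \<open>\<bar>\<rho> (\<parallel>s - t\<parallel>)\<bar>\<close>: by Gaussian regression
  \<open>X t = \<rho> X s + W\<close> with \<open>W\<close> independent of \<open>X s\<close>, and \<open>f\<close> is \<open>1\<close>-Lipschitz. Splitting \<open>B \<times> B\<close> at
  distance \<open>H\<close>, where \<open>\<bar>\<rho>\<bar> \<le> \<epsilon>\<close> beyond \<open>H\<close>, gives \<open>R\<^sub>1(B) \<le> \<epsilon> + |ball H| / |B|\<close>, and
  \<open>|\<lambda>A| = \<lambda>\<^sup>2 |A| \<rightarrow> \<infinity>\<close>.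

  The independence of \<open>W\<close> comes from the factorisation of the joint characteristic function,
  via L\'evy's uniqueness theorem applied to reweighted measures; the Gaussian parameters of a
  linear combination are read off from the second-order expansion of its characteristic function.
\<close>

section \<open>Second moments\<close>

lemma abs_mult_le_half_sum_squares:
  fixes a b :: real
  shows "\<bar>a * b\<bar> \<le> (a\<^sup>2 + b\<^sup>2) / 2"
  using sum_squares_bound[of "\<bar>a\<bar>" "\<bar>b\<bar>"] by (simp add: abs_mult)

lemma integrable_mult_square_integrable:
  fixes F G :: "'a \<Rightarrow> real"
  assumes [measurable]: "F \<in> borel_measurable M" "G \<in> borel_measurable M"
    and "integrable M (\<lambda>x. (F x)\<^sup>2)" "integrable M (\<lambda>x. (G x)\<^sup>2)"
  shows "integrable M (\<lambda>x. F x * G x)"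
proof (rule Bochner_Integration.integrable_bound[where f="\<lambda>x. ((F x)\<^sup>2 + (G x)\<^sup>2) / 2"])
  show "integrable M (\<lambda>x. ((F x)\<^sup>2 + (G x)\<^sup>2) / 2)" using assms by auto
  show "AE x in M. norm (F x * G x) \<le> norm (((F x)\<^sup>2 + (G x)\<^sup>2) / 2)"
    using abs_mult_le_half_sum_squares by auto
qed simp

lemma integral_abs_mult_le_half_sum_squares:
  fixes U V :: "'a \<Rightarrow> real"
  assumes [measurable]: "U \<in> borel_measurable M" "V \<in> borel_measurable M"
    and U2: "integrable M (\<lambda>x. (U x)\<^sup>2)" and V2: "integrable M (\<lambda>x. (V x)\<^sup>2)"
  shows "(\<integral>x. \<bar>U x * V x\<bar> \<partial>M) \<le> ((\<integral>x. (U x)\<^sup>2 \<partial>M) + (\<integral>x. (V x)\<^sup>2 \<partial>M)) / 2"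
proof -
  have "(\<integral>x. \<bar>U x * V x\<bar> \<partial>M) \<le> (\<integral>x. ((U x)\<^sup>2 + (V x)\<^sup>2) / 2 \<partial>M)"
    using U2 V2 abs_mult_le_half_sum_squares
    by (intro integral_mono integrable_abs integrable_mult_square_integrable) auto
  also have "\<dots> = ((\<integral>x. (U x)\<^sup>2 \<partial>M) + (\<integral>x. (V x)\<^sup>2 \<partial>M)) / 2"
    using U2 V2 by simp
  finally show ?thesis .
qed

lemma integrable_square_of_abs_le:
  fixes V D :: "'a \<Rightarrow> real"
  assumes [measurable]: "D \<in> borel_measurable M"
    and V2: "integrable M (\<lambda>x. (V x)\<^sup>2)" and D: "\<And>x. \<bar>D x\<bar> \<le> \<bar>r\<bar> * \<bar>V x\<bar>"
  shows "integrable M (\<lambda>x. (D x)\<^sup>2)"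
proof -
  have "(D x)\<^sup>2 \<le> r\<^sup>2 * (V x)\<^sup>2" for x
    using D[of x] unfolding abs_mult[symmetric] abs_le_square_iff by (simp add: power_mult_distrib)
  then show ?thesis
    by (intro Bochner_Integration.integrable_bound[OF integrable_mult_right[OF V2, of "r\<^sup>2"]]) auto
qed

lemma abs_integral_mult_le_of_abs_le:
  fixes U V D :: "'a \<Rightarrow> real"
  assumes [measurable]: "U \<in> borel_measurable M" "V \<in> borel_measurable M" "D \<in> borel_measurable M"
    and U2: "integrable M (\<lambda>x. (U x)\<^sup>2)" and V2: "integrable M (\<lambda>x. (V x)\<^sup>2)"
    and D: "\<And>x. \<bar>D x\<bar> \<le> \<bar>r\<bar> * \<bar>V x\<bar>"
  shows "\<bar>\<integral>x. U x * D x \<partial>M\<bar> \<le> \<bar>r\<bar> * (((\<integral>x. (U x)\<^sup>2 \<partial>M) + (\<integral>x. (V x)\<^sup>2 \<partial>M)) / 2)"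
proof -
  have D2: "integrable M (\<lambda>x. (D x)\<^sup>2)"
    by (rule integrable_square_of_abs_le[OF _ V2 D]) simp
  have "\<bar>\<integral>x. U x * D x \<partial>M\<bar> \<le> (\<integral>x. \<bar>U x * D x\<bar> \<partial>M)"
    by (rule integral_abs_bound)
  also have "\<dots> \<le> (\<integral>x. \<bar>r\<bar> * \<bar>U x * V x\<bar> \<partial>M)"
  proof (rule integral_mono)
    show "integrable M (\<lambda>x. \<bar>U x * D x\<bar>)"
      using U2 D2 by (intro integrable_abs integrable_mult_square_integrable) auto
    show "integrable M (\<lambda>x. \<bar>r\<bar> * \<bar>U x * V x\<bar>)"
      using U2 V2 by (intro integrable_mult_right integrable_abs integrable_mult_square_integrable) auto
    show "\<bar>U x * D x\<bar> \<le> \<bar>r\<bar> * \<bar>U x * V x\<bar>" for x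
      using mult_left_mono[OF D[of x] abs_ge_zero[of "U x"]] by (simp add: abs_mult mult_ac)
  qed
  also have "\<dots> = \<bar>r\<bar> * (\<integral>x. \<bar>U x * V x\<bar> \<partial>M)" by simp
  also have "\<dots> \<le> \<bar>r\<bar> * (((\<integral>x. (U x)\<^sup>2 \<partial>M) + (\<integral>x. (V x)\<^sup>2 \<partial>M)) / 2)"
    using integral_abs_mult_le_half_sum_squares[OF _ _ U2 V2] by (intro mult_left_mono) simp_all
  finally show ?thesis .
qed

lemma (in prob_space) variance_le_expectation_square_diff:
  fixes Y :: "'a \<Rightarrow> real"
  assumes [measurable]: "Y \<in> borel_measurable M" and Y2: "integrable M (\<lambda>x. (Y x - c)\<^sup>2)"
  shows "variance Y \<le> expectation (\<lambda>x. (Y x - c)\<^sup>2)"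
proof -
  have Zi: "integrable M (\<lambda>x. Y x - c)" by (rule square_integrable_imp_integrable[OF _ Y2]) simp
  have Yi: "integrable M Y"
    using Bochner_Integration.integrable_add[OF Zi integrable_const[of c]] by simp
  have "variance Y = variance (\<lambda>x. Y x - c)" using Yi by (simp add: prob_space)
  also have "\<dots> = expectation (\<lambda>x. (Y x - c)\<^sup>2) - (expectation (\<lambda>x. Y x - c))\<^sup>2"
    by (rule variance_eq[OF Zi Y2])
  also have "\<dots> \<le> expectation (\<lambda>x. (Y x - c)\<^sup>2)" by simp
  finally show ?thesis .
qed

lemma (in finite_measure) integrable_square_Lipschitz_comp:
  fixes f :: "real \<Rightarrow> real" and X :: "'a \<Rightarrow> real"
  assumes [measurable]: "f \<in> borel_measurable borel" "X \<in> borel_measurable M"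
    and f: "\<And>x y. \<bar>f x - f y\<bar> \<le> \<bar>x - y\<bar>" and X2: "integrable M (\<lambda>\<omega>. (X \<omega>)\<^sup>2)"
  shows "integrable M (\<lambda>\<omega>. (f (X \<omega>))\<^sup>2)"
proof (rule Bochner_Integration.integrable_bound[where f="\<lambda>\<omega>. 2 * (f 0)\<^sup>2 + 2 * (X \<omega>)\<^sup>2"])
  show "integrable M (\<lambda>\<omega>. 2 * (f 0)\<^sup>2 + 2 * (X \<omega>)\<^sup>2)" using X2 by auto
  have "(f x)\<^sup>2 \<le> 2 * (f 0)\<^sup>2 + 2 * x\<^sup>2" for x
  proof -
    have "\<bar>f x\<bar> \<le> \<bar>f 0\<bar> + \<bar>x\<bar>" using f[of x 0] by linarith
    then have "(f x)\<^sup>2 \<le> (\<bar>f 0\<bar> + \<bar>x\<bar>)\<^sup>2" by (metis abs_ge_zero abs_le_square_iff abs_of_nonneg add_nonneg_nonneg)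
    also have "\<dots> \<le> 2 * (f 0)\<^sup>2 + 2 * x\<^sup>2" using abs_mult_le_half_sum_squares[of "f 0" x]
      by (simp add: power2_sum abs_mult)
    finally show ?thesis .
  qed
  then show "AE \<omega> in M. norm ((f (X \<omega>))\<^sup>2) \<le> norm (2 * (f 0)\<^sup>2 + 2 * (X \<omega>)\<^sup>2)" by auto
qed simp

lemma (in prob_space) variance_Lipschitz_comp_le:
  fixes f :: "real \<Rightarrow> real" and X :: "'a \<Rightarrow> real"
  assumes [measurable]: "f \<in> borel_measurable borel" "X \<in> borel_measurable M"
    and f: "\<And>x y. \<bar>f x - f y\<bar> \<le> \<bar>x - y\<bar>" and X2: "integrable M (\<lambda>\<omega>. (X \<omega>)\<^sup>2)"
  shows "variance (\<lambda>\<omega>. f (X \<omega>)) \<le> expectation (\<lambda>\<omega>. (X \<omega>)\<^sup>2)"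
proof -
  have "(f x - f 0)\<^sup>2 \<le> x\<^sup>2" for x using f[of x 0] by (simp add: abs_le_square_iff)
  moreover have fX2: "integrable M (\<lambda>\<omega>. (f (X \<omega>) - f 0)\<^sup>2)"
    by (rule Bochner_Integration.integrable_bound[OF X2]) (use calculation in auto)
  ultimately have "expectation (\<lambda>\<omega>. (f (X \<omega>) - f 0)\<^sup>2) \<le> expectation (\<lambda>\<omega>. (X \<omega>)\<^sup>2)"
    by (intro integral_mono X2) auto
  with variance_le_expectation_square_diff[OF _ fX2] show ?thesis by simp
qed

text \<open>Independence removes the \<open>W\<close>-part: with \<open>U = f X - E (f X)\<close> centred, \<open>E (U f(W)) = 0\<close>, so only
  the increment \<open>f (r X + W) - f W\<close>, which is at most \<open>\<bar>r X\<bar>\<close>, contributes.\<close>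
lemma (in prob_space) covariance_Lipschitz_comp_le:
  fixes X W :: "'a \<Rightarrow> real" and f :: "real \<Rightarrow> real" and r c :: real
  assumes indep: "indep_var borel X borel W"
    and [measurable]: "f \<in> borel_measurable borel"
    and f: "\<And>x y. \<bar>f x - f y\<bar> \<le> \<bar>x - y\<bar>"
    and X2: "integrable M (\<lambda>\<omega>. (X \<omega>)\<^sup>2)" and W2: "integrable M (\<lambda>\<omega>. (W \<omega>)\<^sup>2)"
  shows "\<bar>expectation (\<lambda>\<omega>. (f (X \<omega>) - expectation (\<lambda>\<omega>. f (X \<omega>))) * (f (r * X \<omega> + W \<omega>) - c))\<bar>
    \<le> \<bar>r\<bar> * expectation (\<lambda>\<omega>. (X \<omega>)\<^sup>2)"
proof -
  have [measurable]: "X \<in> borel_measurable M" "W \<in> borel_measurable M"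
    using indep indep_var_rv1 indep_var_rv2 by auto
  define U where "U \<omega> = f (X \<omega>) - expectation (\<lambda>\<omega>. f (X \<omega>))" for \<omega>
  define D where "D \<omega> = f (r * X \<omega> + W \<omega>) - f (W \<omega>)" for \<omega>
  have [measurable]: "U \<in> borel_measurable M" "D \<in> borel_measurable M"
    unfolding U_def[abs_def] D_def[abs_def] by measurable
  have fX2: "integrable M (\<lambda>\<omega>. (f (X \<omega>))\<^sup>2)" and fW2: "integrable M (\<lambda>\<omega>. (f (W \<omega>))\<^sup>2)"
    using X2 W2 f by (auto intro: integrable_square_Lipschitz_comp)
  have fXi: "integrable M (\<lambda>\<omega>. f (X \<omega>))" and fWi: "integrable M (\<lambda>\<omega>. f (W \<omega>))"
    using fX2 fW2 by (auto intro: square_integrable_imp_integrable)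
  have Ui: "integrable M U" and EU: "expectation U = 0"
    using fXi by (simp_all add: U_def[abs_def] prob_space)
  have U2: "integrable M (\<lambda>\<omega>. (U \<omega>)\<^sup>2)"
    using fX2 fXi by (simp add: U_def power2_diff)
  have D: "\<bar>D \<omega>\<bar> \<le> \<bar>r\<bar> * \<bar>X \<omega>\<bar>" for \<omega>
    using f[of "r * X \<omega> + W \<omega>" "W \<omega>"] by (simp add: D_def abs_mult)
  have "expectation (\<lambda>\<omega>. U \<omega> * f (W \<omega>)) = expectation U * expectation (\<lambda>\<omega>. f (W \<omega>))"
    using indep_var_compose[OF indep, of "\<lambda>x. f x - expectation (\<lambda>\<omega>. f (X \<omega>))" borel f borel]
    by (intro indep_var_lebesgue_integral Ui fWi) (simp_all add: comp_def U_def[abs_def])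
  moreover have "(\<lambda>\<omega>. U \<omega> * (f (r * X \<omega> + W \<omega>) - c)) = (\<lambda>\<omega>. U \<omega> * D \<omega> + U \<omega> * f (W \<omega>) - c * U \<omega>)"
    by (auto simp: D_def algebra_simps)
  moreover have "integrable M (\<lambda>\<omega>. U \<omega> * D \<omega>)" "integrable M (\<lambda>\<omega>. U \<omega> * f (W \<omega>))"
    using U2 fW2 integrable_square_of_abs_le[OF _ X2 D]
    by (auto intro: integrable_mult_square_integrable)
  ultimately have "expectation (\<lambda>\<omega>. U \<omega> * (f (r * X \<omega> + W \<omega>) - c)) = expectation (\<lambda>\<omega>. U \<omega> * D \<omega>)"
    using Ui EU by simp
  also have "\<bar>\<dots>\<bar> \<le> \<bar>r\<bar> * ((expectation (\<lambda>\<omega>. (U \<omega>)\<^sup>2) + expectation (\<lambda>\<omega>. (X \<omega>)\<^sup>2)) / 2)"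
    by (rule abs_integral_mult_le_of_abs_le[OF _ _ _ U2 X2 D]) simp_all
  also have "\<dots> \<le> \<bar>r\<bar> * expectation (\<lambda>\<omega>. (X \<omega>)\<^sup>2)"
    using variance_Lipschitz_comp_le[OF _ _ f X2] by (intro mult_left_mono) (simp_all add: U_def)
  finally show ?thesis by (simp add: U_def)
qed

section \<open>Independence from a factorising characteristic function\<close>

lemma (in prob_space) char_distr:
  "X \<in> borel_measurable M \<Longrightarrow> char (distr M borel X) a = (CLINT x|M. iexp (a * X x))"
  by (simp add: char_def integral_distr)

lemma (in prob_space) integrable_iexp_comp:
  "f \<in> borel_measurable M \<Longrightarrow> integrable M (\<lambda>x. iexp (f x))"
  by (rule integrable_iexp) auto

lemma cos_mult_iexp: "complex_of_real (cos y) * iexp x = (iexp (x + y) + iexp (x - y)) / 2"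
  by (simp add: Re_exp Im_exp complex_eq_iff cos_add sin_add cos_diff sin_diff field_simps)

lemma sin_mult_iexp: "complex_of_real (sin y) * iexp x = - \<i> * (iexp (x + y) - iexp (x - y)) / 2"
  by (simp add: Re_exp Im_exp complex_eq_iff cos_add sin_add cos_diff sin_diff field_simps)

lemma (in prob_space) expectation_indicator_comp:
  assumes "A \<in> sets N" "Z \<in> M \<rightarrow>\<^sub>M N"
  shows "expectation (\<lambda>x. indicator A (Z x)) = prob (Z -` A \<inter> space M)"
proof -
  have "expectation (\<lambda>x. indicator A (Z x)) = expectation (indicator (Z -` A \<inter> space M) :: _ \<Rightarrow> real)"
    by (rule Bochner_Integration.integral_cong) (auto split: split_indicator)
  then show ?thesis using assms by simp
qed

lemma (in prob_space) integral_of_real_mult_iexp: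
  fixes u V :: "'a \<Rightarrow> real"
  assumes [measurable]: "u \<in> borel_measurable M" "V \<in> borel_measurable M" and u: "integrable M u"
  shows "(CLINT x|M. complex_of_real (u x) * iexp (V x))
    = complex_of_real (expectation (\<lambda>x. u x * cos (V x))) + \<i> * complex_of_real (expectation (\<lambda>x. u x * sin (V x)))"
proof -
  have "integrable M (\<lambda>x. u x * cos (V x))" "integrable M (\<lambda>x. u x * sin (V x))"
    by (auto intro!: Bochner_Integration.integrable_bound[OF u] simp: abs_mult mult_left_le)
  then have int: "integrable M (\<lambda>x. complex_of_real (u x * cos (V x)))"
    "integrable M (\<lambda>x. \<i> * complex_of_real (u x * sin (V x)))"
    by (auto intro!: integrable_mult_right integrable_of_real simp del: of_real_mult)
  have "(CLINT x|M. complex_of_real (u x) * iexp (V x))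
      = (CLINT x|M. complex_of_real (u x * cos (V x)) + \<i> * complex_of_real (u x * sin (V x)))"
    by (rule Bochner_Integration.integral_cong) (simp_all add: complex_eq_iff Re_exp Im_exp)
  also have "\<dots> = complex_of_real (expectation (\<lambda>x. u x * cos (V x)))
      + \<i> * complex_of_real (expectation (\<lambda>x. u x * sin (V x)))"
    by (simp only: Bochner_Integration.integral_add[OF int] integral_mult_right_zero integral_complex_of_real)
  finally show ?thesis .
qed

text \<open>The normalised weight \<open>g / c\<close> is a probability density under which \<open>Z\<close> has the same
  characteristic function, hence by L\'evy's uniqueness theorem the same distribution.\<close>
lemma (in prob_space) expectation_weight_indicator_of_char:
  fixes Z g :: "'a \<Rightarrow> real" and c :: real
  assumes [measurable]: "Z \<in> borel_measurable M" "g \<in> borel_measurable M"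
    and g: "\<And>x. x \<in> space M \<Longrightarrow> 0 \<le> g x" "integrable M g" "expectation g = c" "c > 0"
    and char: "\<And>a. (CLINT x|M. complex_of_real (g x) * iexp (a * Z x)) = c * char (distr M borel Z) a"
    and A: "A \<in> sets borel"
  shows "expectation (\<lambda>x. g x * indicator A (Z x)) = c * prob (Z -` A \<inter> space M)"
proof -
  define D where "D = density M (\<lambda>x. ennreal (g x / c))"
  have [measurable]: "Z \<in> borel_measurable D" by (simp add: D_def)
  have "emeasure D (space D) = ennreal (expectation (\<lambda>x. g x / c))"
    unfolding D_def using g
    by (simp add: emeasure_density nn_integral_restrict_space[symmetric] nn_integral_eq_integral)
  then interpret D: prob_space D using g by (intro prob_spaceI) simp
  have "char (distr D borel Z) a = char (distr M borel Z) a" for a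
  proof -
    have "char (distr D borel Z) a = (CLINT x|D. iexp (a * Z x))" by (rule D.char_distr) simp
    also have "\<dots> = (CLINT x|M. (g x / c) *\<^sub>R iexp (a * Z x))"
      unfolding D_def by (rule integral_density) (use g in auto)
    also have "\<dots> = (CLINT x|M. complex_of_real (g x) * iexp (a * Z x)) / c"
      by (simp add: scaleR_conv_of_real field_simps)
    finally show ?thesis using g char[of a] by simp
  qed
  then have "distr D borel Z = distr M borel Z"
    by (intro Levy_uniqueness real_distribution_distr D.real_distribution_distr) auto
  then have "prob (Z -` A \<inter> space M) = (LINT x|distr D borel Z. indicator A x)"
    using A by (simp add: measure_distr)
  also have "\<dots> = (LINT x|D. indicator A (Z x))"
    by (rule integral_distr) (use A in auto)
  also have "\<dots> = (LINT x|M. (g x / c) * indicator A (Z x))"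
    unfolding D_def by (subst integral_density) (use g A in auto)
  finally show ?thesis using g by (simp add: field_simps)
qed

lemma (in prob_space) expectation_mult_indicator_of_char:
  fixes Z h :: "'a \<Rightarrow> real" and \<kappa> :: complex
  assumes [measurable]: "Z \<in> borel_measurable M" "h \<in> borel_measurable M"
    and h: "\<And>x. x \<in> space M \<Longrightarrow> \<bar>h x\<bar> \<le> 1"
    and char: "\<And>a. (CLINT x|M. complex_of_real (h x) * iexp (a * Z x)) = char (distr M borel Z) a * \<kappa>"
    and A: "A \<in> sets borel"
  shows "expectation (\<lambda>x. h x * indicator A (Z x)) = expectation h * prob (Z -` A \<inter> space M)"
proof -
  have hi: "integrable M h" using h by (intro integrable_const_bound[where B=1]) auto
  have hA: "integrable M (\<lambda>x. h x * indicator A (Z x))"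
    using h A by (intro integrable_const_bound[where B=1]) (auto simp: abs_mult split: split_indicator)
  have "char (distr M borel Z) 0 = 1"
    by (intro real_distribution.char_zero real_distribution_distr) simp
  then have \<kappa>: "\<kappa> = complex_of_real (expectation h)"
    using char[of 0] hi by simp
  have "expectation h \<ge> expectation (\<lambda>_. -1)"
    using h hi by (intro integral_mono) (auto simp: abs_le_iff)
  then have c: "2 + expectation h > 0" by (simp add: prob_space)
  \<comment> \<open>the weight is shifted by 2 to make it nonnegative with positive mean\<close>
  have "expectation (\<lambda>x. (2 + h x) * indicator A (Z x)) = (2 + expectation h) * prob (Z -` A \<inter> space M)"
  proof (rule expectation_weight_indicator_of_char[OF _ _ _ _ _ c _ A])
    show "(CLINT x|M. complex_of_real (2 + h x) * iexp (a * Z x))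
        = complex_of_real (2 + expectation h) * char (distr M borel Z) a" for a
    proof -
      have int: "integrable M (\<lambda>x. 2 * iexp (a * Z x))"
        "integrable M (\<lambda>x. complex_of_real (h x) * iexp (a * Z x))"
        using h by (auto intro!: integrable_const_bound[where B=2] simp: norm_mult)
          (use h in force)
      have "(CLINT x|M. complex_of_real (2 + h x) * iexp (a * Z x))
          = (CLINT x|M. 2 * iexp (a * Z x) + complex_of_real (h x) * iexp (a * Z x))"
        by (simp add: distrib_right)
      also have "\<dots> = 2 * char (distr M borel Z) a + char (distr M borel Z) a * \<kappa>"
        by (simp only: Bochner_Integration.integral_add[OF int] integral_mult_right_zero
            char char_distr[symmetric] \<open>Z \<in> borel_measurable M\<close>)
      finally show ?thesis by (simp add: \<kappa> algebra_simps)
    qed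
  qed (use h hi in \<open>auto simp: prob_space abs_le_iff, fastforce\<close>)
  moreover have "expectation (\<lambda>x. (2 + h x) * indicator A (Z x))
      = 2 * prob (Z -` A \<inter> space M) + expectation (\<lambda>x. h x * indicator A (Z x))"
  proof -
    have "expectation (\<lambda>x. indicator A (Z x) :: real) = prob (Z -` A \<inter> space M)"
      using A by (simp add: expectation_indicator_comp)
    moreover have "integrable M (\<lambda>x. indicator A (Z x) :: real)"
      using A by (intro integrable_const_bound[where B=1]) auto
    ultimately show ?thesis using hA by (simp add: distrib_right)
  qed
  ultimately show ?thesis by (simp add: algebra_simps)
qed

context prob_space
begin

context
  fixes X Y :: "'a \<Rightarrow> real"
  assumes X [measurable]: "X \<in> borel_measurable M" and Y [measurable]: "Y \<in> borel_measurable M"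
    and char_factorization: "\<And>a b. (CLINT x|M. iexp (a * X x + b * Y x))
      = char (distr M borel X) a * char (distr M borel Y) b"
begin

lemma integral_cos_mult_iexp_of_char_factorization:
  "(CLINT x|M. complex_of_real (cos (b * Y x)) * iexp (a * X x))
    = char (distr M borel X) a * ((char (distr M borel Y) b + char (distr M borel Y) (- b)) / 2)"
proof -
  have int: "integrable M (\<lambda>x. iexp (a * X x + b * Y x))" "integrable M (\<lambda>x. iexp (a * X x + - b * Y x))"
    by (rule integrable_iexp_comp, simp)+
  have "(CLINT x|M. complex_of_real (cos (b * Y x)) * iexp (a * X x))
      = (CLINT x|M. (iexp (a * X x + b * Y x) + iexp (a * X x + - b * Y x)) / 2)"
    by (rule Bochner_Integration.integral_cong[OF refl], subst cos_mult_iexp, simp)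
  also have "\<dots> = ((CLINT x|M. iexp (a * X x + b * Y x)) + (CLINT x|M. iexp (a * X x + - b * Y x))) / 2"
    by (simp only: integral_divide_zero Bochner_Integration.integral_add[OF int])
  finally show ?thesis by (simp only: char_factorization) (simp add: algebra_simps)
qed

lemma integral_sin_mult_iexp_of_char_factorization:
  "(CLINT x|M. complex_of_real (sin (b * Y x)) * iexp (a * X x))
    = char (distr M borel X) a * (- \<i> * (char (distr M borel Y) b - char (distr M borel Y) (- b)) / 2)"
proof -
  have int: "integrable M (\<lambda>x. iexp (a * X x + b * Y x))" "integrable M (\<lambda>x. iexp (a * X x + - b * Y x))"
    by (rule integrable_iexp_comp, simp)+
  have "(CLINT x|M. complex_of_real (sin (b * Y x)) * iexp (a * X x))
      = (CLINT x|M. - \<i> * (iexp (a * X x + b * Y x) - iexp (a * X x + - b * Y x)) / 2)"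
    by (rule Bochner_Integration.integral_cong[OF refl], subst sin_mult_iexp, simp)
  also have "\<dots> = - \<i> * ((CLINT x|M. iexp (a * X x + b * Y x)) - (CLINT x|M. iexp (a * X x + - b * Y x))) / 2"
    by (simp only: integral_divide_zero integral_mult_right_zero Bochner_Integration.integral_diff[OF int])
  finally show ?thesis by (simp only: char_factorization) (simp add: algebra_simps)
qed

text \<open>The real weights \<open>cos (b Y)\<close> and \<open>sin (b Y)\<close> decouple from \<open>X\<close>; recombined they give the
  complex weight \<open>iexp (b Y)\<close>, now tested against indicators of \<open>X\<close>.\<close>
lemma integral_indicator_mult_iexp_of_char_factorization:
  assumes A: "A \<in> sets borel"
  shows "(CLINT x|M. complex_of_real (indicator A (X x)) * iexp (b * Y x))
    = char (distr M borel Y) b * complex_of_real (prob (X -` A \<inter> space M))"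
proof -
  have cos: "expectation (\<lambda>x. cos (b * Y x) * indicator A (X x))
      = expectation (\<lambda>x. cos (b * Y x)) * prob (X -` A \<inter> space M)"
    by (rule expectation_mult_indicator_of_char[OF _ _ _ integral_cos_mult_iexp_of_char_factorization A]) auto
  have sin: "expectation (\<lambda>x. sin (b * Y x) * indicator A (X x))
      = expectation (\<lambda>x. sin (b * Y x)) * prob (X -` A \<inter> space M)"
    by (rule expectation_mult_indicator_of_char[OF _ _ _ integral_sin_mult_iexp_of_char_factorization A]) auto
  have iA: "integrable M (\<lambda>x. indicator A (X x) :: real)"
    using A by (intro integrable_const_bound[where B=1]) auto
  have "(CLINT x|M. complex_of_real (indicator A (X x)) * iexp (b * Y x))
      = complex_of_real (expectation (\<lambda>x. indicator A (X x) * cos (b * Y x)))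
        + \<i> * complex_of_real (expectation (\<lambda>x. indicator A (X x) * sin (b * Y x)))"
    using A by (intro integral_of_real_mult_iexp[OF _ _ iA]) (simp, measurable)
  also have "\<dots> = (complex_of_real (expectation (\<lambda>x. cos (b * Y x)))
        + \<i> * complex_of_real (expectation (\<lambda>x. sin (b * Y x)))) * complex_of_real (prob (X -` A \<inter> space M))"
    using cos sin by (simp add: mult.commute[of "indicator A _"] distrib_right)
  also have "\<dots> = char (distr M borel Y) b * complex_of_real (prob (X -` A \<inter> space M))"
    using integral_of_real_mult_iexp[of "\<lambda>_. 1" "\<lambda>x. b * Y x"] by (simp add: char_distr)
  finally show ?thesis .
qed

lemma prob_vimage_Int_of_char_factorization:
  assumes A: "A \<in> sets borel" and B: "B \<in> sets borel"
  shows "prob (X -` A \<inter> Y -` B \<inter> space M) = prob (X -` A \<inter> space M) * prob (Y -` B \<inter> space M)"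
proof -
  have "expectation (\<lambda>x. indicator A (X x) * indicator B (Y x))
      = expectation (\<lambda>x. indicator A (X x)) * prob (Y -` B \<inter> space M)"
    by (rule expectation_mult_indicator_of_char[OF _ _ _ integral_indicator_mult_iexp_of_char_factorization[OF A] B])
      (use A in auto)
  moreover have "expectation (\<lambda>x. indicator A (X x) * indicator B (Y x))
      = expectation (indicator (X -` A \<inter> Y -` B \<inter> space M) :: _ \<Rightarrow> real)"
    by (rule Bochner_Integration.integral_cong) (auto split: split_indicator)
  ultimately show ?thesis using A B by (simp add: expectation_indicator_comp)
qed

theorem indep_var_of_char_factorization: "indep_var borel X borel Y"
  unfolding indep_var_distribution_eq
proof (intro conjI)
  show "random_variable borel X" "random_variable borel Y" by simp_all
  show "distr M borel X \<Otimes>\<^sub>M distr M borel Y = distr M (borel \<Otimes>\<^sub>M borel) (\<lambda>x. (X x, Y x))"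
  proof (rule pair_measure_eqI)
    show "sigma_finite_measure (distr M borel X)" "sigma_finite_measure (distr M borel Y)"
      by (intro prob_space_imp_sigma_finite prob_space_distr, simp)+
    fix A B assume "A \<in> sets (distr M borel X)" "B \<in> sets (distr M borel Y)"
    then have A: "A \<in> sets borel" and B: "B \<in> sets borel" by simp_all
    have "(\<lambda>x. (X x, Y x)) -` (A \<times> B) \<inter> space M = X -` A \<inter> Y -` B \<inter> space M" by auto
    then show "emeasure (distr M borel X) A * emeasure (distr M borel Y) B
        = emeasure (distr M (borel \<Otimes>\<^sub>M borel) (\<lambda>x. (X x, Y x))) (A \<times> B)"
      using A B
      by (simp add: emeasure_distr emeasure_eq_measure prob_vimage_Int_of_char_factorization ennreal_mult'[symmetric])
  qed simp
qed

end

end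

section \<open>Characteristic functions of centred Gaussian variables\<close>

lemma (in prob_space) expectation_min_square_cube_tendsto_zero:
  fixes Z :: "'a \<Rightarrow> real"
  assumes [measurable]: "Z \<in> borel_measurable M" and Z2: "integrable M (\<lambda>x. (Z x)\<^sup>2)"
  shows "((\<lambda>t. expectation (\<lambda>x. min (6 * (Z x)\<^sup>2) (\<bar>t\<bar> * \<bar>Z x\<bar> ^ 3))) \<longlongrightarrow> 0) (at 0)"
  unfolding tendsto_at_iff_sequentially comp_def
proof (intro allI impI)
  fix T :: "nat \<Rightarrow> real" assume "T \<longlonglongrightarrow> 0"
  then have "(\<lambda>n. expectation (\<lambda>x. min (6 * (Z x)\<^sup>2) (\<bar>T n\<bar> * \<bar>Z x\<bar> ^ 3))) \<longlonglongrightarrow> expectation (\<lambda>x. 0)"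
  proof (intro integral_dominated_convergence[where w="\<lambda>x. 6 * (Z x)\<^sup>2"] AE_I2)
    show "(\<lambda>n. min (6 * (Z x)\<^sup>2) (\<bar>T n\<bar> * \<bar>Z x\<bar> ^ 3)) \<longlonglongrightarrow> 0" for x
      using tendsto_min[OF tendsto_const tendsto_mult_right[OF tendsto_rabs[OF \<open>T \<longlonglongrightarrow> 0\<close>]],
          of "6 * (Z x)\<^sup>2" "\<bar>Z x\<bar> ^ 3"]
      by simp
  qed (use Z2 in auto)
  then show "(\<lambda>n. expectation (\<lambda>x. min (6 * (Z x)\<^sup>2) (\<bar>T n\<bar> * \<bar>Z x\<bar> ^ 3))) \<longlonglongrightarrow> 0" by simp
qed

lemma (in prob_space) char_distr_second_order:
  fixes Z :: "'a \<Rightarrow> real"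
  assumes [measurable]: "Z \<in> borel_measurable M" and Z2: "integrable M (\<lambda>x. (Z x)\<^sup>2)"
    and Z0: "expectation Z = 0"
  shows "((\<lambda>t. (char (distr M borel Z) t - 1) / complex_of_real (t\<^sup>2))
    \<longlongrightarrow> - complex_of_real (expectation (\<lambda>x. (Z x)\<^sup>2) / 2)) (at 0)"
proof -
  define \<sigma> where "\<sigma> = expectation (\<lambda>x. (Z x)\<^sup>2)"
  define e where "e t = expectation (\<lambda>x. min (6 * (Z x)\<^sup>2) (\<bar>t\<bar> * \<bar>Z x\<bar> ^ 3))" for t
  have Zi: "integrable M Z" by (rule square_integrable_imp_integrable[OF _ Z2]) simp
  have bound: "cmod ((char (distr M borel Z) t - 1) / complex_of_real (t\<^sup>2) + complex_of_real (\<sigma> / 2)) \<le> e t / 6"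
    if "t \<noteq> 0" for t
  proof -
    have "cmod (char (distr M borel Z) t - (1 - t\<^sup>2 * \<sigma> / 2)) \<le> t\<^sup>2 / 6 * e t"
      unfolding e_def using Zi Z2 Z0 by (intro char_approx3') (simp_all add: \<sigma>_def)
    moreover have "(char (distr M borel Z) t - 1) / complex_of_real (t\<^sup>2) + complex_of_real (\<sigma> / 2)
        = (char (distr M borel Z) t - (1 - t\<^sup>2 * \<sigma> / 2)) / complex_of_real (t\<^sup>2)"
      using that by (simp add: field_simps)
    ultimately show ?thesis using that by (simp add: norm_divide norm_power field_simps)
  qed
  have "((\<lambda>t. (char (distr M borel Z) t - 1) / complex_of_real (t\<^sup>2) + complex_of_real (\<sigma> / 2)) \<longlongrightarrow> 0) (at 0)"
  proof (rule Lim_null_comparison)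
    show "\<forall>\<^sub>F t in at 0. cmod ((char (distr M borel Z) t - 1) / complex_of_real (t\<^sup>2) + complex_of_real (\<sigma> / 2)) \<le> e t / 6"
      using bound by (simp add: eventually_at_filter)
    show "((\<lambda>t. e t / 6) \<longlongrightarrow> 0) (at 0)"
      using tendsto_divide_zero[OF expectation_min_square_cube_tendsto_zero[OF _ Z2], of 6]
      by (simp add: e_def)
  qed
  from tendsto_add[OF this tendsto_const[of "- complex_of_real (\<sigma> / 2)"]]
  show ?thesis by (simp add: \<sigma>_def)
qed

text \<open>Comparing with the expansion \<open>char t = 1 - t\<^sup>2 E Z\<^sup>2 / 2 + o(t\<^sup>2)\<close>: the imaginary part
  \<open>sin (t m)\<close> is of order \<open>t\<close> unless \<open>m = 0\<close>, and the real part then identifies \<open>v\<close>.\<close>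
lemma (in prob_space) gaussian_char_parameters:
  fixes Z :: "'a \<Rightarrow> real" and m v :: real
  assumes [measurable]: "Z \<in> borel_measurable M" and Z2: "integrable M (\<lambda>x. (Z x)\<^sup>2)"
    and Z0: "expectation Z = 0"
    and char: "\<And>t. char (distr M borel Z) t = exp (\<i> * complex_of_real (t * m) - complex_of_real (v * t\<^sup>2 / 2))"
  shows "m = 0" and "v = expectation (\<lambda>x. (Z x)\<^sup>2)"
proof -
  define \<sigma> where "\<sigma> = expectation (\<lambda>x. (Z x)\<^sup>2)"
  define q where "q t = (char (distr M borel Z) t - 1) / complex_of_real (t\<^sup>2)" for t
  have q: "(q \<longlongrightarrow> - complex_of_real (\<sigma> / 2)) (at 0)"
    unfolding q_def \<sigma>_def by (rule char_distr_second_order[OF _ Z2 Z0]) simp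
  have Re_q: "Re (q t) = (exp (- (v * t\<^sup>2 / 2)) * cos (t * m) - 1) / t\<^sup>2"
    and Im_q: "Im (q t) = exp (- (v * t\<^sup>2 / 2)) * sin (t * m) / t\<^sup>2" for t
    by (simp_all add: q_def char Re_exp Im_exp Re_divide_of_real Im_divide_of_real)
  have "((\<lambda>t. t * Im (q t)) \<longlongrightarrow> 0 * Im (- complex_of_real (\<sigma> / 2))) (at 0)"
    by (intro tendsto_intros q)
  moreover have "((\<lambda>t. t * Im (q t)) \<longlongrightarrow> m) (at 0)"
  proof -
    have "((\<lambda>t. exp (- (v * t\<^sup>2 / 2)) * sin (t * m) / t) \<longlongrightarrow> m) (at 0)" by real_asymp
    moreover have "\<forall>\<^sub>F t in at 0. exp (- (v * t\<^sup>2 / 2)) * sin (t * m) / t = t * Im (q t)"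
      by (auto simp: eventually_at_filter Im_q power2_eq_square)
    ultimately show ?thesis by (rule Lim_transform_eventually)
  qed
  ultimately show m0: "m = 0" by (auto dest: tendsto_unique[rotated 1])
  have "((\<lambda>t. Re (q t)) \<longlongrightarrow> Re (- complex_of_real (\<sigma> / 2))) (at 0)"
    by (intro tendsto_intros q)
  moreover have "((\<lambda>t. Re (q t)) \<longlongrightarrow> - (v / 2)) (at 0)"
    unfolding Re_q m0 by simp real_asymp
  ultimately show "v = \<sigma>" by (auto dest: tendsto_unique[rotated 1])
qed

section \<open>Variance of a spatial average\<close>

lemma (in pair_sigma_finite) integrable_pair_measure_bound:
  fixes f :: "_ \<Rightarrow> real"
  assumes f[measurable]: "f \<in> borel_measurable (M1 \<Otimes>\<^sub>M M2)" and w: "integrable M2 w"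
    and f_int: "\<And>y. y \<in> space M2 \<Longrightarrow> integrable M1 (\<lambda>x. f (x, y))"
    and f_le: "\<And>y. y \<in> space M2 \<Longrightarrow> (\<integral>x. \<bar>f (x, y)\<bar> \<partial>M1) \<le> w y"
  shows "integrable (M1 \<Otimes>\<^sub>M M2) f"
proof (rule integrableI_bounded[OF f])
  have "(\<integral>\<^sup>+ p. norm (f p) \<partial>(M1 \<Otimes>\<^sub>M M2)) = (\<integral>\<^sup>+ y. (\<integral>\<^sup>+ x. norm (f (x, y)) \<partial>M1) \<partial>M2)"
    by (rule nn_integral_snd[symmetric]) simp
  also have "\<dots> \<le> (\<integral>\<^sup>+ y. norm (w y) \<partial>M2)"
  proof (rule nn_integral_mono)
    fix y assume y: "y \<in> space M2"
    have "(\<integral>\<^sup>+ x. norm (f (x, y)) \<partial>M1) = ennreal (\<integral>x. \<bar>f (x, y)\<bar> \<partial>M1)"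
      using f_int[OF y] by (simp add: nn_integral_eq_integral)
    also have "\<dots> \<le> norm (w y)"
      using f_le[OF y] by (intro ennreal_leI) simp
    finally show "(\<integral>\<^sup>+ x. norm (f (x, y)) \<partial>M1) \<le> norm (w y)" .
  qed
  also have "\<dots> < \<infinity>" using w by (simp add: integrable_iff_bounded)
  finally show "(\<integral>\<^sup>+ p. norm (f p) \<partial>(M1 \<Otimes>\<^sub>M M2)) < \<infinity>" .
qed

lemma integrable_indicator_Times:
  assumes "sigma_finite_measure N" "B \<in> sets N" "emeasure N B < \<infinity>"
  shows "integrable (N \<Otimes>\<^sub>M N) (indicator (B \<times> B) :: _ \<Rightarrow> real)"
  using assms sigma_finite_measure.emeasure_pair_measure_Times[OF assms(1,2,2)]
  by (intro integrable_real_indicator pair_measureI) (simp_all add: ennreal_mult_less_top)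

context prob_space
begin

context
  fixes N :: "'b measure" and g :: "'a \<Rightarrow> 'b \<Rightarrow> real"
  assumes N: "sigma_finite_measure N"
    and g: "(\<lambda>(\<omega>, s). g \<omega> s) \<in> borel_measurable (M \<Otimes>\<^sub>M N)"
begin

interpretation MN: pair_sigma_finite M N
  by (rule pair_sigma_finite.intro[OF prob_space_imp_sigma_finite[OF prob_space_axioms] N])

interpretation NN: pair_sigma_finite N N
  using N by (intro pair_sigma_finite.intro)

interpretation MNN: pair_sigma_finite M "N \<Otimes>\<^sub>M N"
  by (intro pair_sigma_finite.intro prob_space_imp_sigma_finite prob_space_axioms NN.sigma_finite_measure_axioms)

lemma measurable_uncurry [measurable]: "(\<lambda>p. g (fst p) (snd p)) \<in> borel_measurable (M \<Otimes>\<^sub>M N)"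
  using g by (simp add: split_beta')

lemma measurable_section: "s \<in> space N \<Longrightarrow> (\<lambda>\<omega>. g \<omega> s) \<in> borel_measurable M"
  using measurable_Pair1[OF g] by simp

lemma measurable_pair_sections [measurable]:
  "(\<lambda>p. g (fst p) (fst (snd p))) \<in> borel_measurable (M \<Otimes>\<^sub>M (N \<Otimes>\<^sub>M N))"
  "(\<lambda>p. g (fst p) (snd (snd p))) \<in> borel_measurable (M \<Otimes>\<^sub>M (N \<Otimes>\<^sub>M N))"
  using measurable_compose[OF _ measurable_uncurry, of "\<lambda>p. (fst p, fst (snd p))" "M \<Otimes>\<^sub>M (N \<Otimes>\<^sub>M N)"]
    measurable_compose[OF _ measurable_uncurry, of "\<lambda>p. (fst p, snd (snd p))" "M \<Otimes>\<^sub>M (N \<Otimes>\<^sub>M N)"]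
  by simp_all

lemma measurable_set_integral [measurable]:
  "B \<in> sets N \<Longrightarrow> (\<lambda>\<omega>. LINT s:B|N. g \<omega> s) \<in> borel_measurable M"
  unfolding set_lebesgue_integral_def
  by (rule sigma_finite_measure.borel_measurable_lebesgue_integral[OF N]) (simp add: split_beta')

context
  fixes B :: "'b set" and C :: real
  assumes B[measurable]: "B \<in> sets N" and B_finite: "emeasure N B < \<infinity>"
    and g2: "\<And>s. integrable M (\<lambda>\<omega>. (g \<omega> s)\<^sup>2)" and g2_le: "\<And>s. expectation (\<lambda>\<omega>. (g \<omega> s)\<^sup>2) \<le> C"
begin

lemma integrable_indicator_mult_section:
  "integrable (M \<Otimes>\<^sub>M N) (\<lambda>(\<omega>, s). indicator B s * g \<omega> s)"
proof (rule MN.integrable_pair_measure_bound)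
  show "integrable N (\<lambda>s. (1 + C) / 2 * indicator B s)"
    using B_finite by (intro integrable_mult_right integrable_real_indicator B)
  fix s assume "s \<in> space N"
  note [measurable] = measurable_section[OF this]
  have gi: "integrable M (\<lambda>\<omega>. g \<omega> s)" by (rule square_integrable_imp_integrable[OF _ g2]) simp
  then show "integrable M (\<lambda>\<omega>. case (\<omega>, s) of (\<omega>, s) \<Rightarrow> indicator B s * g \<omega> s)" by simp
  have "expectation (\<lambda>\<omega>. \<bar>1 * g \<omega> s\<bar>) \<le> (expectation (\<lambda>_. 1\<^sup>2) + expectation (\<lambda>\<omega>. (g \<omega> s)\<^sup>2)) / 2"
    by (rule integral_abs_mult_le_half_sum_squares[OF _ _ _ g2]) simp_all
  also have "\<dots> \<le> (1 + C) / 2" using g2_le[of s] by (simp add: prob_space)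
  finally show "(\<integral>\<omega>. \<bar>case (\<omega>, s) of (\<omega>, s) \<Rightarrow> indicator B s * g \<omega> s\<bar> \<partial>M) \<le> (1 + C) / 2 * indicator B s"
    by (simp add: abs_mult split: split_indicator)
qed measurable

lemma integrable_indicator_mult_sections:
  "integrable (M \<Otimes>\<^sub>M (N \<Otimes>\<^sub>M N))
    (\<lambda>(\<omega>, st). indicator (B \<times> B) st * (g \<omega> (fst st) * g \<omega> (snd st)))"
proof (rule MNN.integrable_pair_measure_bound)
  show "integrable (N \<Otimes>\<^sub>M N) (\<lambda>st. C * indicator (B \<times> B) st)"
    by (intro integrable_mult_right integrable_indicator_Times N B B_finite)
  fix st :: "'b \<times> 'b" assume "st \<in> space (N \<Otimes>\<^sub>M N)"
  then have [measurable]: "(\<lambda>\<omega>. g \<omega> (fst st)) \<in> borel_measurable M" "(\<lambda>\<omega>. g \<omega> (snd st)) \<in> borel_measurable M"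
    by (auto intro: measurable_section simp: space_pair_measure)
  have "integrable M (\<lambda>\<omega>. g \<omega> (fst st) * g \<omega> (snd st))"
    using g2 by (intro integrable_mult_square_integrable) simp_all
  then show "integrable M (\<lambda>\<omega>. case (\<omega>, st) of (\<omega>, st) \<Rightarrow> indicator (B \<times> B) st * (g \<omega> (fst st) * g \<omega> (snd st)))"
    by simp
  have "expectation (\<lambda>\<omega>. \<bar>g \<omega> (fst st) * g \<omega> (snd st)\<bar>)
      \<le> (expectation (\<lambda>\<omega>. (g \<omega> (fst st))\<^sup>2) + expectation (\<lambda>\<omega>. (g \<omega> (snd st))\<^sup>2)) / 2"
    by (rule integral_abs_mult_le_half_sum_squares[OF _ _ g2 g2]) simp_all
  also have "\<dots> \<le> C" using g2_le[of "fst st"] g2_le[of "snd st"] by simp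
  finally show "(\<integral>\<omega>. \<bar>case (\<omega>, st) of (\<omega>, st) \<Rightarrow> indicator (B \<times> B) st * (g \<omega> (fst st) * g \<omega> (snd st))\<bar> \<partial>M)
      \<le> C * indicator (B \<times> B) st"
    by (simp add: abs_mult split: split_indicator)
qed measurable

lemma AE_set_integrable_section: "AE \<omega> in M. set_integrable N B (g \<omega>)"
  using MN.AE_integrable_fst[OF integrable_indicator_mult_section]
  by (simp add: set_integrable_def)

lemma expectation_square_set_integral:
  shows "integrable M (\<lambda>\<omega>. (LINT s:B|N. g \<omega> s)\<^sup>2)"
    and "integrable (N \<Otimes>\<^sub>M N) (\<lambda>st. indicator (B \<times> B) st * expectation (\<lambda>\<omega>. g \<omega> (fst st) * g \<omega> (snd st)))"
    and "expectation (\<lambda>\<omega>. (LINT s:B|N. g \<omega> s)\<^sup>2)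
      = (\<integral>st. indicator (B \<times> B) st * expectation (\<lambda>\<omega>. g \<omega> (fst st) * g \<omega> (snd st)) \<partial>(N \<Otimes>\<^sub>M N))"
proof -
  define G where "G \<omega> = (LINT s:B|N. g \<omega> s)" for \<omega>
  define h where "h \<omega> st = indicator (B \<times> B) st * (g \<omega> (fst st) * g \<omega> (snd st))" for \<omega> st
  have h: "integrable (M \<Otimes>\<^sub>M (N \<Otimes>\<^sub>M N)) (\<lambda>(\<omega>, st). h \<omega> st)"
    unfolding h_def by (rule integrable_indicator_mult_sections)
  have "AE \<omega> in M. (\<integral>st. h \<omega> st \<partial>(N \<Otimes>\<^sub>M N)) = (G \<omega>)\<^sup>2"
    using MNN.AE_integrable_fst[OF h]
  proof eventually_elim
    fix \<omega> assume "integrable (N \<Otimes>\<^sub>M N) (h \<omega>)"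
    then have "(\<integral>st. h \<omega> st \<partial>(N \<Otimes>\<^sub>M N)) = (\<integral>s. \<integral>t. h \<omega> (s, t) \<partial>N \<partial>N)"
      using NN.integral_fst'[of "h \<omega>"] by simp
    also have "\<dots> = (\<integral>s. (indicator B s * g \<omega> s) * G \<omega> \<partial>N)"
    proof -
      have "h \<omega> (s, t) = (indicator B s * g \<omega> s) * (indicator B t * g \<omega> t)" for s t
        by (simp add: h_def indicator_times)
      then show ?thesis by (simp add: G_def set_lebesgue_integral_def)
    qed
    also have "\<dots> = (G \<omega>)\<^sup>2" by (simp add: G_def set_lebesgue_integral_def power2_eq_square)
    finally show "(\<integral>st. h \<omega> st \<partial>(N \<Otimes>\<^sub>M N)) = (G \<omega>)\<^sup>2" .
  qed
  moreover have int_h: "integrable M (\<lambda>\<omega>. \<integral>st. h \<omega> st \<partial>(N \<Otimes>\<^sub>M N))"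
    by (rule MNN.integrable_fst[OF h])
  ultimately show G2: "integrable M (\<lambda>\<omega>. (LINT s:B|N. g \<omega> s)\<^sup>2)"
    unfolding G_def[symmetric] by (rule integrable_cong_AE_imp[rotated 2]) (simp add: G_def)
  have Eh: "(\<integral>\<omega>. h \<omega> st \<partial>M) = indicator (B \<times> B) st * expectation (\<lambda>\<omega>. g \<omega> (fst st) * g \<omega> (snd st))" for st
    by (simp add: h_def)
  show "integrable (N \<Otimes>\<^sub>M N) (\<lambda>st. indicator (B \<times> B) st * expectation (\<lambda>\<omega>. g \<omega> (fst st) * g \<omega> (snd st)))"
    using MNN.integrable_snd[OF h] by (simp only: Eh)
  have "expectation (\<lambda>\<omega>. (G \<omega>)\<^sup>2) = expectation (\<lambda>\<omega>. \<integral>st. h \<omega> st \<partial>(N \<Otimes>\<^sub>M N))"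
    using \<open>AE \<omega> in M. _ = _\<close> borel_measurable_integrable[OF int_h]
    by (intro integral_cong_AE) (auto simp: G_def)
  also have "\<dots> = (\<integral>st. \<integral>\<omega>. h \<omega> st \<partial>M \<partial>(N \<Otimes>\<^sub>M N))"
    by (simp only: MNN.integral_fst[OF h] MNN.integral_snd[OF h])
  finally show "expectation (\<lambda>\<omega>. (LINT s:B|N. g \<omega> s)\<^sup>2)
      = (\<integral>st. indicator (B \<times> B) st * expectation (\<lambda>\<omega>. g \<omega> (fst st) * g \<omega> (snd st)) \<partial>(N \<Otimes>\<^sub>M N))"
    by (simp only: Eh G_def)
qed


end

end

end

lemma (in prob_space) variance_set_average_le_expectation_square:
  fixes F :: "'a \<Rightarrow> 'b \<Rightarrow> real" and N :: "'b measure" and m :: real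
  assumes N: "sigma_finite_measure N"
    and F: "(\<lambda>(\<omega>, s). F \<omega> s) \<in> borel_measurable (M \<Otimes>\<^sub>M N)"
    and B[measurable]: "B \<in> sets N" and B_finite: "emeasure N B < \<infinity>" and B_pos: "measure N B > 0"
    and F_integrable: "AE \<omega> in M. set_integrable N B (\<lambda>s. F \<omega> s - m)"
    and F2: "integrable M (\<lambda>\<omega>. (LINT s:B|N. F \<omega> s - m)\<^sup>2)"
  shows "variance (\<lambda>\<omega>. (1 / measure N B) * (LINT s:B|N. F \<omega> s))
    \<le> expectation (\<lambda>\<omega>. (LINT s:B|N. F \<omega> s - m)\<^sup>2) / (measure N B)\<^sup>2"
proof -
  define \<mu> where "\<mu> = measure N B"
  define Y where "Y \<omega> = (1 / \<mu>) * (LINT s:B|N. F \<omega> s)" for \<omega>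
  have "(\<lambda>(\<omega>, s). F \<omega> s - m) \<in> borel_measurable (M \<Otimes>\<^sub>M N)"
    using F by (simp add: split_beta')
  then have [measurable]: "Y \<in> borel_measurable M" "(\<lambda>\<omega>. LINT s:B|N. F \<omega> s - m) \<in> borel_measurable M"
    unfolding Y_def[abs_def] using measurable_set_integral[OF N F B] measurable_set_integral[OF N _ B] by simp_all
  have "set_integrable N B (\<lambda>_. m)"
    using B_finite by (simp add: set_integrable_def integrable_real_indicator)
  moreover have "(LINT s:B|N. m) = m * \<mu>"
    using B_finite by (simp add: set_lebesgue_integral_def \<mu>_def)
  ultimately have Y_AE: "AE \<omega> in M. (Y \<omega> - m)\<^sup>2 = (LINT s:B|N. F \<omega> s - m)\<^sup>2 / \<mu>\<^sup>2"
    using F_integrable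
  proof (elim AE_mp, intro AE_I2 impI)
    fix \<omega> assume "set_integrable N B (\<lambda>s. F \<omega> s - m)"
    then have "(LINT s:B|N. (F \<omega> s - m) + m) = (LINT s:B|N. F \<omega> s - m) + (LINT s:B|N. m)"
      using \<open>set_integrable N B (\<lambda>_. m)\<close> by (rule set_integral_add)
    then have "Y \<omega> - m = (LINT s:B|N. F \<omega> s - m) / \<mu>"
      using B_pos \<open>(LINT s:B|N. m) = m * \<mu>\<close> by (simp add: Y_def \<mu>_def field_simps)
    then show "(Y \<omega> - m)\<^sup>2 = (LINT s:B|N. F \<omega> s - m)\<^sup>2 / \<mu>\<^sup>2"
      by (simp add: power_divide)
  qed
  have "integrable M (\<lambda>\<omega>. (Y \<omega> - m)\<^sup>2)"
    by (rule integrable_cong_AE_imp[OF integrable_divide[OF F2, of "\<mu>\<^sup>2"]])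
      (use Y_AE in \<open>auto elim: AE_mp\<close>)
  then have "variance Y \<le> expectation (\<lambda>\<omega>. (Y \<omega> - m)\<^sup>2)"
    by (rule variance_le_expectation_square_diff[rotated]) simp
  also have "\<dots> = expectation (\<lambda>\<omega>. (LINT s:B|N. F \<omega> s - m)\<^sup>2 / \<mu>\<^sup>2)"
    using Y_AE by (intro integral_cong_AE) auto
  finally show ?thesis by (simp add: Y_def[abs_def] \<mu>_def)
qed

theorem (in prob_space) variance_set_average_le:
  fixes F :: "'a \<Rightarrow> 'b \<Rightarrow> real" and N :: "'b measure" and k :: "'b \<times> 'b \<Rightarrow> real" and m C K :: real
  assumes N: "sigma_finite_measure N"
    and F: "(\<lambda>(\<omega>, s). F \<omega> s) \<in> borel_measurable (M \<Otimes>\<^sub>M N)"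
    and B[measurable]: "B \<in> sets N" and B_finite: "emeasure N B < \<infinity>" and B_pos: "measure N B > 0"
    and F2: "\<And>s. integrable M (\<lambda>\<omega>. (F \<omega> s - m)\<^sup>2)" and F2_le: "\<And>s. expectation (\<lambda>\<omega>. (F \<omega> s - m)\<^sup>2) \<le> C"
    and k[measurable]: "k \<in> borel_measurable (N \<Otimes>\<^sub>M N)" and k_bound: "\<And>p. \<bar>k p\<bar> \<le> K"
    and cov: "\<And>s t. s \<in> B \<Longrightarrow> t \<in> B \<Longrightarrow> expectation (\<lambda>\<omega>. (F \<omega> s - m) * (F \<omega> t - m)) \<le> k (s, t)"
  shows "variance (\<lambda>\<omega>. (1 / measure N B) * (LINT s:B|N. F \<omega> s))
    \<le> (\<integral>p. indicator (B \<times> B) p * k p \<partial>(N \<Otimes>\<^sub>M N)) / (measure N B)\<^sup>2"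
proof -
  have g: "(\<lambda>(\<omega>, s). F \<omega> s - m) \<in> borel_measurable (M \<Otimes>\<^sub>M N)"
    using F by (simp add: split_beta')
  note square = expectation_square_set_integral[OF N g B B_finite F2 F2_le]
  have "variance (\<lambda>\<omega>. (1 / measure N B) * (LINT s:B|N. F \<omega> s))
      \<le> expectation (\<lambda>\<omega>. (LINT s:B|N. F \<omega> s - m)\<^sup>2) / (measure N B)\<^sup>2"
    using AE_set_integrable_section[OF N g B B_finite F2 F2_le]
    by (intro variance_set_average_le_expectation_square[OF N F B B_finite B_pos] square(1))
  also have "\<dots> \<le> (\<integral>p. indicator (B \<times> B) p * k p \<partial>(N \<Otimes>\<^sub>M N)) / (measure N B)\<^sup>2"
    unfolding square(3)
  proof (intro divide_right_mono integral_mono)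
    have "norm (indicator (B \<times> B) p * k p) \<le> norm (K * indicator (B \<times> B) p)" for p
      using k_bound[of p] by (auto simp: abs_mult split: split_indicator)
    then show "integrable (N \<Otimes>\<^sub>M N) (\<lambda>p. indicator (B \<times> B) p * k p)"
      by (intro Bochner_Integration.integrable_bound[OF integrable_mult_right[OF integrable_indicator_Times[OF N B B_finite], of K]])
        auto
    show "indicator (B \<times> B) p * expectation (\<lambda>\<omega>. (F \<omega> (fst p) - m) * (F \<omega> (snd p) - m)) \<le> indicator (B \<times> B) p * k p" for p
      using cov[of "fst p" "snd p"] by (auto split: split_indicator)
  qed (use square(2) in simp_all)
  finally show ?thesis .
qed

section \<open>Scaling and the near-diagonal integral\<close>

lemma measure_lborel_scaleR_image:
  fixes A :: "'a::euclidean_space set"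
  assumes "compact A"
  shows "measure lborel ((\<lambda>x. c *\<^sub>R x) ` A) = \<bar>c\<bar> ^ DIM('a) * measure lborel A"
proof -
  have "compact ((\<lambda>x. c *\<^sub>R x) ` A)" using assms by (rule compact_scaling)
  then have "(\<lambda>x. c *\<^sub>R x) ` A \<in> sets lborel" "A \<in> sets lborel"
    using assms by (auto intro: borel_compact)
  then show ?thesis
    using measure_lebesgue_affine[of c 0 A] by simp
qed

lemma integral_near_diagonal_section_le:
  fixes B :: "'a::euclidean_space set" and \<epsilon> H :: real
  assumes B[measurable]: "B \<in> sets lborel" and B_finite: "emeasure lborel B < \<infinity>"
    and \<epsilon>: "\<epsilon> \<ge> 0" and H: "H \<ge> 0"
  shows "(\<integral>t. indicator (B \<times> B) (s, t) * (\<epsilon> + (if dist s t \<le> H then 1 else 0)) \<partial>lborel)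
    \<le> indicator B s * (\<epsilon> * measure lborel B + measure lborel (cball (0::'a) H))"
proof -
  have iB: "integrable lborel (indicator B :: _ \<Rightarrow> real)"
    using B_finite by (intro integrable_real_indicator B)
  have iC: "integrable lborel (indicator (cball s H) :: _ \<Rightarrow> real)"
    using emeasure_lborel_cball_finite[of s H] by (intro integrable_real_indicator) auto
  have "(\<integral>t. indicator (B \<times> B) (s, t) * (\<epsilon> + (if dist s t \<le> H then 1 else 0)) \<partial>lborel)
      \<le> (\<integral>t. indicator B s * (\<epsilon> * indicator B t + indicator (cball s H) t) \<partial>lborel)"
  proof (rule integral_mono)
    show "integrable lborel (\<lambda>t. indicator (B \<times> B) (s, t) * (\<epsilon> + (if dist s t \<le> H then 1 else 0)))"
    proof (rule Bochner_Integration.integrable_bound[OF integrable_mult_right[OF iB, of "\<epsilon> + 1"]])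
      show "AE t in lborel. norm (indicator (B \<times> B) (s, t) * (\<epsilon> + (if dist s t \<le> H then 1 else 0)))
          \<le> norm ((\<epsilon> + 1) * indicator B t)"
        using \<epsilon> by (intro AE_I2) (auto split: split_indicator)
    qed simp
    show "integrable lborel (\<lambda>t. indicator B s * (\<epsilon> * indicator B t + indicator (cball s H) t))"
      using iB iC by simp
    show "indicator (B \<times> B) (s, t) * (\<epsilon> + (if dist s t \<le> H then 1 else 0))
        \<le> indicator B s * (\<epsilon> * indicator B t + indicator (cball s H) t)" for t
      using \<epsilon> by (auto simp: mem_cball split: split_indicator)
  qed
  also have "\<dots> = indicator B s * (\<epsilon> * measure lborel B + measure lborel (cball (0::'a) H))"
    using iB iC H by (simp add: content_cball)
  finally show ?thesis .
qed

lemma integral_near_diagonal_le: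
  fixes B :: "'a::euclidean_space set" and \<epsilon> H :: real
  assumes B[measurable]: "B \<in> sets lborel" and B_finite: "emeasure lborel B < \<infinity>"
    and \<epsilon>: "\<epsilon> \<ge> 0" and H: "H \<ge> 0"
  shows "(\<integral>p. indicator (B \<times> B) p * (\<epsilon> + (if dist (fst p) (snd p) \<le> H then 1 else 0)) \<partial>(lborel \<Otimes>\<^sub>M lborel))
     \<le> \<epsilon> * (measure lborel B)\<^sup>2 + measure lborel B * measure lborel (cball (0::'a) H)"
proof -
  define V where "V = measure lborel (cball (0::'a) H)"
  define f where "f p = indicator (B \<times> B) p * (\<epsilon> + (if dist (fst p) (snd p) \<le> H then 1 else 0 :: real))"
    for p :: "'a \<times> 'a"
  have [measurable]: "f \<in> borel_measurable (lborel \<Otimes>\<^sub>M lborel)"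
    unfolding f_def by measurable
  have f_int: "integrable (lborel \<Otimes>\<^sub>M lborel) f"
  proof (rule Bochner_Integration.integrable_bound[OF integrable_mult_right[OF
        integrable_indicator_Times[OF lborel.sigma_finite_measure_axioms B B_finite], of "\<epsilon> + 1"]])
    show "AE p in lborel \<Otimes>\<^sub>M lborel. norm (f p) \<le> norm ((\<epsilon> + 1) * indicator (B \<times> B) p)"
      using \<epsilon> by (intro AE_I2) (auto simp: f_def split: split_indicator)
  qed simp
  have "(\<integral>p. f p \<partial>(lborel \<Otimes>\<^sub>M lborel)) = (\<integral>s. \<integral>t. f (s, t) \<partial>lborel \<partial>lborel)"
    by (rule lborel_pair.integral_fst'[OF f_int, symmetric])
  also have "\<dots> \<le> (\<integral>s. indicator B s * (\<epsilon> * measure lborel B + V) \<partial>lborel)"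
  proof (rule integral_mono)
    show "integrable lborel (\<lambda>s. \<integral>t. f (s, t) \<partial>lborel)" by (rule lborel_pair.integrable_fst'[OF f_int])
    show "integrable lborel (\<lambda>s. indicator B s * (\<epsilon> * measure lborel B + V))"
      using B_finite by (intro integrable_mult_left integrable_real_indicator B)
    show "(\<integral>t. f (s, t) \<partial>lborel) \<le> indicator B s * (\<epsilon> * measure lborel B + V)" for s
      unfolding f_def V_def by (simp add: integral_near_diagonal_section_le[OF B B_finite \<epsilon> H])
  qed
  also have "\<dots> = measure lborel B * (\<epsilon> * measure lborel B + V)" by simp
  finally show ?thesis by (simp add: f_def V_def power2_eq_square algebra_simps)
qed

lemma compact_disk_or_square:
  fixes A :: "(real^2) set"
  assumes "is_disk A \<or> is_square A"
  shows "compact A"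
  using assms
proof
  assume "is_disk A" then show ?thesis by (auto simp: is_disk_def)
next
  assume "is_square A"
  then obtain p e1 e2 L where A: "A = {p + a *\<^sub>R e1 + b *\<^sub>R e2 | a b. a \<in> {0..L} \<and> b \<in> {0..L}}"
    unfolding is_square_def by blast
  have "A = (\<lambda>z. p + fst z *\<^sub>R e1 + snd z *\<^sub>R e2) ` ({0..L} \<times> {0..L})"
    unfolding A by (fastforce simp: image_iff)
  moreover have "compact ((\<lambda>z. p + fst z *\<^sub>R e1 + snd z *\<^sub>R e2) ` ({0..L::real} \<times> {0..L}))"
    by (intro compact_continuous_image compact_Times compact_Icc continuous_intros)
  ultimately show ?thesis by simp
qed

section \<open>Isotropic Gaussian fields\<close>

lemma tendsto_zero_at_top_abs_le:
  fixes f :: "real \<Rightarrow> real"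
  assumes "(f \<longlongrightarrow> 0) at_top" "e > 0"
  shows "\<exists>H\<ge>0. \<forall>h\<ge>H. \<bar>f h\<bar> \<le> e"
proof -
  obtain N where "\<And>h. h \<ge> N \<Longrightarrow> dist (f h) 0 < e"
    using tendstoD[OF assms] by (auto simp: eventually_at_top_linorder)
  then show ?thesis by (intro exI[of _ "max N 0"]) (auto simp: dist_real_def less_imp_le)
qed

lemma abs_max_zero_diff_le: "\<bar>max 0 (x - u) - max 0 (y - u)\<bar> \<le> \<bar>x - y\<bar>" for x y u :: real
  by (auto simp: max_def abs_if)

locale isotropic_gaussian_field =
  fixes M :: "'a measure" and X :: "real^2 \<Rightarrow> 'a \<Rightarrow> real" and \<rho> :: "real \<Rightarrow> real"
  assumes isotropic_standard_gaussian: "isotropic_standard_gaussian M X \<rho>"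
begin

sublocale prob_space M
  using isotropic_standard_gaussian by (simp add: isotropic_standard_gaussian_def)

lemma gaussian_process: "gaussian_process M X"
  using isotropic_standard_gaussian by (simp add: isotropic_standard_gaussian_def)

lemma X_measurable [measurable]: "X s \<in> borel_measurable M"
  using gaussian_process by (simp add: gaussian_process_def)

lemma expectation_X: "expectation (X s) = 0"
  using isotropic_standard_gaussian by (simp add: isotropic_standard_gaussian_def)

lemma expectation_X_mult: "expectation (\<lambda>\<omega>. X s \<omega> * X t \<omega>) = \<rho> (norm (s - t))"
  using isotropic_standard_gaussian by (simp add: isotropic_standard_gaussian_def expectation_X)

lemma expectation_X_square: "expectation (\<lambda>\<omega>. (X s \<omega>)\<^sup>2) = 1"
  using isotropic_standard_gaussian by (simp add: isotropic_standard_gaussian_def expectation_X)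

lemma integrable_X_square: "integrable M (\<lambda>\<omega>. (X s \<omega>)\<^sup>2)"
  using expectation_X_square[of s] not_integrable_integral_eq by fastforce

lemma integrable_X: "integrable M (X s)"
  by (rule square_integrable_imp_integrable[OF X_measurable integrable_X_square])

lemma integrable_X_mult: "integrable M (\<lambda>\<omega>. X s \<omega> * X t \<omega>)"
  by (rule integrable_mult_square_integrable[OF X_measurable X_measurable integrable_X_square integrable_X_square])

lemma char_linear_combination:
  fixes S :: "(real^2) set" and c :: "real^2 \<Rightarrow> real"
  assumes S: "finite S"
  defines "Z \<equiv> \<lambda>\<omega>. \<Sum>s\<in>S. c s * X s \<omega>"
  shows "char (distr M borel Z) t = complex_of_real (exp (- (t\<^sup>2 * expectation (\<lambda>\<omega>. (Z \<omega>)\<^sup>2)) / 2))"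
proof -
  have [measurable]: "Z \<in> borel_measurable M" unfolding Z_def by measurable
  have "(\<lambda>\<omega>. (Z \<omega>)\<^sup>2) = (\<lambda>\<omega>. \<Sum>s\<in>S. \<Sum>s'\<in>S. c s * c s' * (X s \<omega> * X s' \<omega>))"
    by (simp add: Z_def power2_eq_square sum_product mult_ac)
  then have Z2: "integrable M (\<lambda>\<omega>. (Z \<omega>)\<^sup>2)"
    by (simp add: integrable_X_mult)
  have EZ: "expectation Z = 0"
    using integrable_X by (simp add: Z_def expectation_X)
  obtain m v where char: "\<And>\<tau>. char (distr M borel Z) \<tau> = exp (\<i> * complex_of_real (\<tau> * m) - complex_of_real (v * \<tau>\<^sup>2 / 2))"
    using gaussian_process S unfolding gaussian_process_def Z_def by blast
  with gaussian_char_parameters[OF _ Z2 EZ char] show ?thesis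
    by (simp add: exp_of_real[symmetric] mult.commute)
qed

lemma char_two_points:
  assumes "s \<noteq> t"
  shows "(CLINT \<omega>|M. iexp (a * X s \<omega> + b * X t \<omega>))
    = complex_of_real (exp (- (a\<^sup>2 + 2 * a * b * \<rho> (norm (s - t)) + b\<^sup>2) / 2))"
proof -
  define c where "c x = (if x = s then a else b)" for x
  have Z: "(\<Sum>x\<in>{s, t}. c x * X x \<omega>) = a * X s \<omega> + b * X t \<omega>" for \<omega>
    using assms by (simp add: c_def)
  have "expectation (\<lambda>\<omega>. (a * X s \<omega> + b * X t \<omega>)\<^sup>2)
      = expectation (\<lambda>\<omega>. a\<^sup>2 * (X s \<omega>)\<^sup>2 + 2 * a * b * (X s \<omega> * X t \<omega>) + b\<^sup>2 * (X t \<omega>)\<^sup>2)"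
    by (simp add: power2_eq_square algebra_simps)
  also have "\<dots> = a\<^sup>2 + 2 * a * b * \<rho> (norm (s - t)) + b\<^sup>2"
    using integrable_X_square integrable_X_mult by (simp add: expectation_X_square expectation_X_mult)
  finally have "char (distr M borel (\<lambda>\<omega>. a * X s \<omega> + b * X t \<omega>)) 1
      = complex_of_real (exp (- (a\<^sup>2 + 2 * a * b * \<rho> (norm (s - t)) + b\<^sup>2) / 2))"
    using char_linear_combination[of "{s, t}" c 1] by (simp add: Z)
  then show ?thesis by (simp add: char_distr)
qed

lemma distr_X: "distr M borel (X s) = std_normal_distribution"
proof (rule Levy_uniqueness)
  show "char (distr M borel (X s)) = char std_normal_distribution"
    using char_linear_combination[of "{s}" "\<lambda>_. 1"] by (simp add: fun_eq_iff expectation_X_square char_std_normal_distribution)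
qed (simp_all add: real_distribution_distr real_dist_normal_dist)

lemma expectation_comp_X:
  fixes f :: "real \<Rightarrow> real"
  assumes "f \<in> borel_measurable borel"
  shows "expectation (\<lambda>\<omega>. f (X s \<omega>)) = (LINT x|std_normal_distribution. f x)"
  using integral_distr[OF X_measurable assms, of s] by (simp add: distr_X)

text \<open>\<open>\<rho> (norm (s - t)) * X s\<close> is the \<open>L\<^sup>2\<close>-projection of \<open>X t\<close> onto \<open>X s\<close>; for a Gaussian pair the
  uncorrelated residual is independent, seen here through the characteristic function.\<close>
lemma indep_var_residual:
  assumes "s \<noteq> t"
  shows "indep_var borel (X s) borel (\<lambda>\<omega>. X t \<omega> - \<rho> (norm (s - t)) * X s \<omega>)"
proof -
  define r where "r = \<rho> (norm (s - t))"
  define W where "W \<omega> = X t \<omega> - r * X s \<omega>" for \<omega>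
  have [measurable]: "W \<in> borel_measurable M" unfolding W_def[abs_def] by measurable
  have joint: "(CLINT \<omega>|M. iexp (a * X s \<omega> + b * W \<omega>)) = complex_of_real (exp (- (a\<^sup>2 + (1 - r\<^sup>2) * b\<^sup>2) / 2))"
    for a b
  proof -
    have "(CLINT \<omega>|M. iexp (a * X s \<omega> + b * W \<omega>)) = (CLINT \<omega>|M. iexp ((a - b * r) * X s \<omega> + b * X t \<omega>))"
      by (simp add: W_def algebra_simps)
    also have "\<dots> = complex_of_real (exp (- ((a - b * r)\<^sup>2 + 2 * (a - b * r) * b * r + b\<^sup>2) / 2))"
      unfolding r_def by (rule char_two_points[OF assms])
    also have "(a - b * r)\<^sup>2 + 2 * (a - b * r) * b * r + b\<^sup>2 = a\<^sup>2 + (1 - r\<^sup>2) * b\<^sup>2"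
      by (simp add: power2_eq_square algebra_simps)
    finally show ?thesis .
  qed
  have "(CLINT \<omega>|M. iexp (a * X s \<omega> + b * W \<omega>)) = char (distr M borel (X s)) a * char (distr M borel W) b"
    for a b
  proof -
    have "char (distr M borel (X s)) a = (CLINT \<omega>|M. iexp (a * X s \<omega> + 0 * W \<omega>))"
      "char (distr M borel W) b = (CLINT \<omega>|M. iexp (0 * X s \<omega> + b * W \<omega>))"
      by (simp_all add: char_distr)
    moreover have "exp (- (a\<^sup>2 + (1 - r\<^sup>2) * b\<^sup>2) / 2)
        = exp (- (a\<^sup>2 + (1 - r\<^sup>2) * 0\<^sup>2) / 2) * exp (- (0\<^sup>2 + (1 - r\<^sup>2) * b\<^sup>2) / 2)"
      by (subst exp_add[symmetric]) (simp add: field_simps)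
    ultimately show ?thesis by (simp only: joint of_real_mult)
  qed
  then show ?thesis unfolding W_def r_def by (rule indep_var_of_char_factorization[rotated 2]) simp_all
qed

context
  fixes f :: "real \<Rightarrow> real" and c :: real
  assumes f_measurable [measurable]: "f \<in> borel_measurable borel"
    and f_Lipschitz: "\<And>x y. \<bar>f x - f y\<bar> \<le> \<bar>x - y\<bar>"
  defines "c \<equiv> LINT x|std_normal_distribution. f x"
begin

lemma centered_comp_X_square:
  shows "integrable M (\<lambda>\<omega>. (f (X s \<omega>) - c)\<^sup>2)" and "expectation (\<lambda>\<omega>. (f (X s \<omega>) - c)\<^sup>2) \<le> 1"
proof -
  have fX2: "integrable M (\<lambda>\<omega>. (f (X s \<omega>))\<^sup>2)"
    by (rule integrable_square_Lipschitz_comp[OF f_measurable X_measurable f_Lipschitz integrable_X_square])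
  moreover have "integrable M (\<lambda>\<omega>. f (X s \<omega>))"
    by (rule square_integrable_imp_integrable[OF _ fX2]) simp
  ultimately show "integrable M (\<lambda>\<omega>. (f (X s \<omega>) - c)\<^sup>2)"
    by (simp add: power2_diff)
  have "expectation (\<lambda>\<omega>. (f (X s \<omega>) - c)\<^sup>2) = variance (\<lambda>\<omega>. f (X s \<omega>))"
    by (simp add: expectation_comp_X[OF f_measurable, folded c_def])
  also have "\<dots> \<le> expectation (\<lambda>\<omega>. (X s \<omega>)\<^sup>2)"
    by (rule variance_Lipschitz_comp_le[OF f_measurable X_measurable f_Lipschitz integrable_X_square])
  finally show "expectation (\<lambda>\<omega>. (f (X s \<omega>) - c)\<^sup>2) \<le> 1"
    by (simp add: expectation_X_square)
qed

lemma covariance_comp_X_le_one: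
  "\<bar>expectation (\<lambda>\<omega>. (f (X s \<omega>) - c) * (f (X t \<omega>) - c))\<bar> \<le> 1"
proof -
  have "\<bar>expectation (\<lambda>\<omega>. (f (X s \<omega>) - c) * (f (X t \<omega>) - c))\<bar>
      \<le> expectation (\<lambda>\<omega>. \<bar>(f (X s \<omega>) - c) * (f (X t \<omega>) - c)\<bar>)"
    by (rule integral_abs_bound)
  also have "\<dots> \<le> (expectation (\<lambda>\<omega>. (f (X s \<omega>) - c)\<^sup>2) + expectation (\<lambda>\<omega>. (f (X t \<omega>) - c)\<^sup>2)) / 2"
    by (rule integral_abs_mult_le_half_sum_squares[OF _ _ centered_comp_X_square(1) centered_comp_X_square(1)]) simp_all
  also have "\<dots> \<le> 1"
    using centered_comp_X_square(2)[of s] centered_comp_X_square(2)[of t] by simp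
  finally show ?thesis .
qed

lemma covariance_comp_X_le_rho:
  assumes "s \<noteq> t"
  shows "\<bar>expectation (\<lambda>\<omega>. (f (X s \<omega>) - c) * (f (X t \<omega>) - c))\<bar> \<le> \<bar>\<rho> (norm (s - t))\<bar>"
proof -
  define r where "r = \<rho> (norm (s - t))"
  define W where "W \<omega> = X t \<omega> - r * X s \<omega>" for \<omega>
  have "(\<lambda>\<omega>. (W \<omega>)\<^sup>2) = (\<lambda>\<omega>. (X t \<omega>)\<^sup>2 - 2 * r * (X s \<omega> * X t \<omega>) + r\<^sup>2 * (X s \<omega>)\<^sup>2)"
    by (auto simp: W_def power2_eq_square algebra_simps)
  then have W2: "integrable M (\<lambda>\<omega>. (W \<omega>)\<^sup>2)"
    using integrable_X_square integrable_X_mult by simp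
  have "\<bar>expectation (\<lambda>\<omega>. (f (X s \<omega>) - expectation (\<lambda>\<omega>. f (X s \<omega>))) * (f (r * X s \<omega> + W \<omega>) - c))\<bar>
      \<le> \<bar>r\<bar> * expectation (\<lambda>\<omega>. (X s \<omega>)\<^sup>2)"
    using indep_var_residual[OF assms] unfolding W_def[abs_def] r_def[symmetric]
    by (intro covariance_Lipschitz_comp_le[OF _ f_measurable f_Lipschitz integrable_X_square])
      (simp_all add: W2[unfolded W_def])
  then show ?thesis
    by (simp add: W_def r_def expectation_comp_X[OF f_measurable, folded c_def] expectation_X_square)
qed

end

lemma covariance_truncation_le:
  fixes \<epsilon> H u :: real
  assumes \<epsilon>: "\<epsilon> \<ge> 0" and H: "H \<ge> 0" and \<rho>: "\<And>h. h \<ge> H \<Longrightarrow> \<bar>\<rho> h\<bar> \<le> \<epsilon>"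
  defines "c \<equiv> LINT x|std_normal_distribution. max 0 (x - u)"
  shows "expectation (\<lambda>\<omega>. (max 0 (X s \<omega> - u) - c) * (max 0 (X t \<omega> - u) - c))
    \<le> \<epsilon> + (if dist s t \<le> H then 1 else 0)"
proof -
  have f: "(\<lambda>x. max 0 (x - u)) \<in> borel_measurable borel" "\<And>x y. \<bar>max 0 (x - u) - max 0 (y - u)\<bar> \<le> \<bar>x - y\<bar>"
    by (simp_all add: abs_max_zero_diff_le)
  show ?thesis
  proof (cases "dist s t \<le> H")
    case True
    then show ?thesis
      using covariance_comp_X_le_one[OF f, of s t] \<epsilon> by (simp add: c_def)
  next
    case False
    then have "s \<noteq> t" using H by auto
    with False show ?thesis
      using covariance_comp_X_le_rho[OF f \<open>s \<noteq> t\<close>] \<rho>[of "norm (s - t)"]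
      by (simp add: c_def dist_norm)
  qed
qed

lemma R1_le:
  fixes B :: "(real^2) set" and \<epsilon> H u :: real
  assumes X: "(\<lambda>(\<omega>, s). X s \<omega>) \<in> borel_measurable (M \<Otimes>\<^sub>M lborel)"
    and B: "compact B" "measure lborel B > 0"
    and \<epsilon>: "\<epsilon> \<ge> 0" and H: "H \<ge> 0" and \<rho>: "\<And>h. h \<ge> H \<Longrightarrow> \<bar>\<rho> h\<bar> \<le> \<epsilon>"
  shows "R1 M X u B \<le> \<epsilon> + measure lborel (cball (0::real^2) H) / measure lborel B"
proof -
  define c where "c = (LINT x|std_normal_distribution. max 0 (x - u))"
  define k where "k p = \<epsilon> + (if dist (fst p) (snd p) \<le> H then 1 else 0)" for p :: "(real^2) \<times> (real^2)"
  have B_sets [measurable]: "B \<in> sets lborel"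
    using B(1) by (simp add: borel_compact)
  have B_finite: "emeasure lborel B < \<infinity>"
    using B(1) by (rule emeasure_compact_finite)
  have "R1 M X u B \<le> (\<integral>p. indicator (B \<times> B) p * k p \<partial>(lborel \<Otimes>\<^sub>M lborel)) / (measure lborel B)\<^sup>2"
    unfolding R1_def
  proof (rule variance_set_average_le[where m=c and C=1 and K="\<epsilon> + 1"])
    have "(\<lambda>p. X (snd p) (fst p)) \<in> borel_measurable (M \<Otimes>\<^sub>M lborel)"
      using X by (simp add: split_beta')
    then show "(\<lambda>(\<omega>, s). max 0 (X s \<omega> - u)) \<in> borel_measurable (M \<Otimes>\<^sub>M lborel)"
      unfolding split_beta' by measurable
    show "integrable M (\<lambda>\<omega>. (max 0 (X s \<omega> - u) - c)\<^sup>2)"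
      and "expectation (\<lambda>\<omega>. (max 0 (X s \<omega> - u) - c)\<^sup>2) \<le> 1" for s
      using centered_comp_X_square[of "\<lambda>x. max 0 (x - u)"] by (simp_all add: abs_max_zero_diff_le c_def)
    show "k \<in> borel_measurable (lborel \<Otimes>\<^sub>M lborel)" unfolding k_def by measurable
    show "\<bar>k p\<bar> \<le> \<epsilon> + 1" for p using \<epsilon> by (simp add: k_def)
    show "expectation (\<lambda>\<omega>. (max 0 (X s \<omega> - u) - c) * (max 0 (X t \<omega> - u) - c)) \<le> k (s, t)" for s t
      unfolding k_def c_def by (simp add: covariance_truncation_le[OF \<epsilon> H \<rho>])
  qed (use B B_sets B_finite lborel.sigma_finite_measure_axioms in simp_all)
  also have "\<dots> \<le> (\<epsilon> * (measure lborel B)\<^sup>2 + measure lborel B * measure lborel (cball (0::real^2) H))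
      / (measure lborel B)\<^sup>2"
    unfolding k_def by (intro divide_right_mono integral_near_diagonal_le B_sets B_finite \<epsilon> H) simp
  also have "\<dots> = \<epsilon> + measure lborel (cball (0::real^2) H) / measure lborel B"
    using B by (simp add: field_simps power2_eq_square)
  finally show ?thesis .
qed

lemma R1_nonneg: "R1 M X u B \<ge> 0"
  unfolding R1_def by (rule variance_positive)

theorem R1_scaled_tendsto_zero:
  fixes A :: "(real^2) set" and u :: real
  assumes X: "(\<lambda>(\<omega>, s). X s \<omega>) \<in> borel_measurable (M \<Otimes>\<^sub>M lborel)"
    and \<rho>: "(\<rho> \<longlongrightarrow> 0) at_top" and A: "compact A"
  shows "((\<lambda>l. R1 M X u ((\<lambda>x. l *\<^sub>R x) ` A)) \<longlongrightarrow> 0) at_top"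
proof (cases "measure lborel A = 0")
  case True
  then have "R1 M X u ((\<lambda>x. l *\<^sub>R x) ` A) = 0" for l
    using measure_lborel_scaleR_image[OF A, of l] by (simp add: R1_def)
  then show ?thesis by simp
next
  case False
  then have A_pos: "measure lborel A > 0" using measure_nonneg[of lborel A] by linarith
  have scaled: "measure lborel ((\<lambda>x. l *\<^sub>R x) ` A) = l\<^sup>2 * measure lborel A" for l
    using measure_lborel_scaleR_image[OF A, of l] by simp
  show ?thesis
  proof (rule tendstoI)
    fix e :: real assume "e > 0"
    obtain H where H: "H \<ge> 0" and \<rho>_H: "\<And>h. h \<ge> H \<Longrightarrow> \<bar>\<rho> h\<bar> \<le> e / 2"
      using tendsto_zero_at_top_abs_le[OF \<rho>, of "e / 2"] \<open>e > 0\<close> by auto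
    define V where "V = measure lborel (cball (0::real^2) H)"
    have "((\<lambda>l. V / measure lborel A * (1 / l\<^sup>2)) \<longlongrightarrow> V / measure lborel A * 0) at_top"
      by (intro tendsto_intros) real_asymp
    then have "\<forall>\<^sub>F l in at_top. V / measure lborel A * (1 / l\<^sup>2) < e / 2"
      by (rule order_tendstoD(2)) (use \<open>e > 0\<close> in simp)
    with eventually_gt_at_top[of 0]
    show "\<forall>\<^sub>F l in at_top. dist (R1 M X u ((\<lambda>x. l *\<^sub>R x) ` A)) 0 < e"
    proof eventually_elim
      fix l :: real assume "l > 0" and small: "V / measure lborel A * (1 / l\<^sup>2) < e / 2"
      have "R1 M X u ((\<lambda>x. l *\<^sub>R x) ` A) \<le> e / 2 + V / (l\<^sup>2 * measure lborel A)"
        unfolding V_def scaled[symmetric]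
        using \<open>e > 0\<close> \<open>l > 0\<close> A_pos scaled
        by (intro R1_le[OF X compact_scaling[OF A] _ _ H \<rho>_H]) simp_all
      also have "\<dots> < e" using small by (simp add: field_simps)
      finally show "dist (R1 M X u ((\<lambda>x. l *\<^sub>R x) ` A)) 0 < e"
        using R1_nonneg by (simp add: dist_real_def)
    qed
  qed
qed

end

theorem corollary3:
  fixes M :: "'a measure" and X :: "real^2 \<Rightarrow> 'a \<Rightarrow> real" and \<rho> :: "real \<Rightarrow> real"
    and u :: real and A :: "(real^2) set"
  assumes "isotropic_standard_gaussian M X \<rho>"
    and "(\<lambda>(\<omega>, s). X s \<omega>) \<in> borel_measurable (M \<Otimes>\<^sub>M lborel)"
    and "\<And>h1 h2. 0 \<le> h1 \<Longrightarrow> h1 \<le> h2 \<Longrightarrow> \<rho> h2 \<le> \<rho> h1"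
    and "(\<rho> \<longlongrightarrow> 0) at_top"
    and "u \<ge> 0"
    and "is_disk A \<or> is_square A"
  shows "((\<lambda>l. R1 M X u ((\<lambda>x. l *\<^sub>R x) ` A)) \<longlongrightarrow> 0) at_top"
proof -
  interpret isotropic_gaussian_field M X \<rho> by unfold_locales (rule assms(1))
  show ?thesis
    using R1_scaled_tendsto_zero[OF assms(2) assms(4) compact_disk_or_square[OF assms(6)]] .
qed

end
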